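(* Let $S$ be a numerical semigroup with multiplicity $m(S) = 3$, and let its Apéry set with respect to $3$ be $\{0,a_1,a_2\}$, where for $i=1,2$, $a_i$ is the smallest element of $S$ with $a_i \equiv i \pmod{3}$. (a) If $|a_1-a_2|\leq 2$, then $\dim_{\mathrm{mat}} S=2$. (b) If $|a_1-a_2| > 2$, then $\dim_{\mathrm{mat}} S=3$.
   Context: $\mathbb{N} = \{0,1,2,\ldots\}$. A numerical semigroup is an additive subsemigroup of $\mathbb{N}$ containing $0$ with finite complement in $\mathbb{N}$; its multiplicity $m(S)$ is its smallest nonzero element. $\mathsf{M}_d(X)$ denotes the $d\times d$ matrices with entries in $X$. For $A \in \mathsf{M}_d(\mathbb{Q})$, $\mathcal{S}(A) = \{ n \in \mathbb{N} : A^n \in \mathsf{M}_d(\mathbb{Z})\}$. The matricial dimension $\dim_{\mathrm{mat}} S$ is the smallest $d$ such that $S = \mathcal{S}(A)$ for some $A \in \mathsf{M}_d(\mathbb{Q})$. *)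

theory Defs
  imports Main "Jordan_Normal_Form.Matrix"
begin

definition numerical_semigroup :: "nat set \<Rightarrow> bool" where
  "numerical_semigroup S \<longleftrightarrow> 0 \<in> S \<and> (\<forall>x\<in>S. \<forall>y\<in>S. x + y \<in> S) \<and> finite (UNIV - S)"

definition multiplicity_ns :: "nat set \<Rightarrow> nat" where
  "multiplicity_ns S = (LEAST x. x \<in> S \<and> x \<noteq> 0)"

definition int_mat :: "rat mat \<Rightarrow> bool" where
  "int_mat B \<longleftrightarrow> (\<forall>i<dim_row B. \<forall>j<dim_col B. B $$ (i, j) \<in> \<int>)"

definition S_of :: "rat mat \<Rightarrow> nat set" where
  "S_of A = {n. int_mat (A ^\<^sub>m n)}"

definition dim_mat :: "nat set \<Rightarrow> nat" where
  "dim_mat S = (LEAST d. \<exists>A \<in> carrier_mat d d. S = S_of A)"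

end

theory Submission
  imports Defs
begin

(* Multiplicity 3 forces S = 3N + {0, a1, a2} with a2 <= 2 a1 and a1 <= 2 a2.

   If A is a rational 1x1 matrix with A^3 integral, then A is integral by the
   rational root test, so 1 would lie in S(A), whereas 1 is not in S. If A is 2x2 with A^3
   integral, then det A and tr A are rational roots of the monic integer cubics
   x^3 - det (A^3) and x^3 - 3 (det A) x - tr (A^3), hence integers, and by Cayley-Hamilton
   A^(n+2) is integral as soon as A^n and A^(n+1) are. Since a1 - 1, a1 and a2, a2 + 1 lie in S,
   so do a1 + 1 and a2 + 2, which means |a1 - a2| <= 2.

   Let C have order 3 (the companion matrix of x^2 + x + 1, or the cyclic
   permutation matrix) and D = diag (2^(k i)). The n-th power of D (2 C) D^-1 has entries
   2^(n + k i - k j) (C^n) i j, where C^n has entries in {-1, 0, 1}; weights k can be chosen so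
   that this is integral exactly for n in S. *)

section \<open>Numerical semigroups of multiplicity 3\<close>

lemma numerical_semigroupD:
  assumes "numerical_semigroup S"
  shows "0 \<in> S" "s \<in> S \<Longrightarrow> t \<in> S \<Longrightarrow> s + t \<in> S" "finite (UNIV - S)"
  using assms unfolding numerical_semigroup_def by simp_all

lemma numerical_semigroup_cofinite:
  assumes "numerical_semigroup S"
  obtains N where "\<And>n. N \<le> n \<Longrightarrow> n \<in> S"
proof -
  obtain N where N: "\<forall>n\<in>UNIV - S. n < N"
    using numerical_semigroupD(3)[OF assms] unfolding finite_nat_set_iff_bounded ..
  show thesis
  proof (rule that)
    fix n assume "N \<le> n"
    then show "n \<in> S" using N by (meson DiffI UNIV_I not_le)
  qed
qed

lemma numerical_semigroup_add_mult:
  assumes "numerical_semigroup S" "s \<in> S" "t \<in> S"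
  shows "s + k * t \<in> S"
proof (induction k)
  case (Suc k)
  have "s + Suc k * t = (s + k * t) + t" by simp
  then show ?case using numerical_semigroupD(2)[OF assms(1) Suc assms(3)] by argo
qed (use assms in simp)

lemma multiplicity_ns:
  assumes "numerical_semigroup S"
  shows "multiplicity_ns S \<in> S" "multiplicity_ns S \<noteq> 0"
    and "\<And>s. s \<in> S \<Longrightarrow> s \<noteq> 0 \<Longrightarrow> multiplicity_ns S \<le> s"
proof -
  obtain N where "\<And>n. N \<le> n \<Longrightarrow> n \<in> S"
    using numerical_semigroup_cofinite[OF assms] by blast
  then have "N + 1 \<in> S \<and> N + 1 \<noteq> 0" by simp
  from LeastI[of "\<lambda>x. x \<in> S \<and> x \<noteq> 0", OF this]
  show "multiplicity_ns S \<in> S" "multiplicity_ns S \<noteq> 0"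
    unfolding multiplicity_ns_def by simp_all
  show "\<And>s. s \<in> S \<Longrightarrow> s \<noteq> 0 \<Longrightarrow> multiplicity_ns S \<le> s"
    unfolding multiplicity_ns_def by (simp add: Least_le)
qed

lemma Apery_element_mem:
  assumes S: "numerical_semigroup S" and "m \<noteq> 0"
  shows "(LEAST x. x \<in> S \<and> x mod m = r mod m) \<in> S"
    and "(LEAST x. x \<in> S \<and> x mod m = r mod m) mod m = r mod m"
proof -
  obtain N where "\<And>n. N \<le> n \<Longrightarrow> n \<in> S"
    using numerical_semigroup_cofinite[OF S] by blast
  moreover have "N \<le> N * m + r mod m"
    using \<open>m \<noteq> 0\<close> by (cases m) auto
  ultimately have "N * m + r mod m \<in> S \<and> (N * m + r mod m) mod m = r mod m"
    by simp
  from LeastI[of "\<lambda>x. x \<in> S \<and> x mod m = r mod m", OF this]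
  show "(LEAST x. x \<in> S \<and> x mod m = r mod m) \<in> S"
    and "(LEAST x. x \<in> S \<and> x mod m = r mod m) mod m = r mod m"
    by simp_all
qed

lemma numerical_semigroup_mem_iff_Apery:
  assumes S: "numerical_semigroup S" and "m \<in> S" "m \<noteq> 0"
  shows "n \<in> S \<longleftrightarrow> (LEAST x. x \<in> S \<and> x mod m = n mod m) \<le> n"
proof
  assume "n \<in> S"
  then show "(LEAST x. x \<in> S \<and> x mod m = n mod m) \<le> n" by (simp add: Least_le)
next
  define w where "w = (LEAST x. x \<in> S \<and> x mod m = n mod m)"
  assume "w \<le> n"
  have w: "w \<in> S" "w mod m = n mod m"
    unfolding w_def using Apery_element_mem[OF S \<open>m \<noteq> 0\<close>] by blast+
  have "m dvd n - w"
    using mod_eq_dvd_iff_nat[OF \<open>w \<le> n\<close>, of m] w(2) by simp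
  then have "w + (n - w) div m * m = n"
    using \<open>w \<le> n\<close> by simp
  then show "n \<in> S"
    using numerical_semigroup_add_mult[OF S w(1) \<open>m \<in> S\<close>, of "(n - w) div m"] by simp
qed

definition semigroup_of_Apery3 :: "nat \<Rightarrow> nat \<Rightarrow> nat set" where
  "semigroup_of_Apery3 a1 a2 = {n. n mod 3 = 0 \<or> n mod 3 = 1 \<and> a1 \<le> n \<or> n mod 3 = 2 \<and> a2 \<le> n}"

lemma multiplicity_3_semigroup:
  assumes S: "numerical_semigroup S" and "multiplicity_ns S = 3"
    and a1: "a1 = (LEAST x. x \<in> S \<and> x mod 3 = 1)"
    and a2: "a2 = (LEAST x. x \<in> S \<and> x mod 3 = 2)"
  shows "S = semigroup_of_Apery3 a1 a2"
    and "a1 mod 3 = 1" "a2 mod 3 = 2" "1 < a1" "a2 \<le> 2 * a1" "a1 \<le> 2 * a2"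
proof -
  have "3 \<in> S" using multiplicity_ns(1)[OF S] unfolding assms(2) .
  have ge3: "\<And>s. s \<in> S \<Longrightarrow> s \<noteq> 0 \<Longrightarrow> 3 \<le> s"
    using multiplicity_ns(3)[OF S] unfolding assms(2) .
  have a0: "(LEAST x. x \<in> S \<and> x mod 3 = 0) = 0"
    by (rule Least_eq_0) (simp add: numerical_semigroupD(1)[OF S])
  show "S = semigroup_of_Apery3 a1 a2"
  proof (rule Set.set_eqI)
    fix n :: nat
    have mem: "n \<in> S \<longleftrightarrow> (LEAST x. x \<in> S \<and> x mod 3 = n mod 3) \<le> n"
      by (rule numerical_semigroup_mem_iff_Apery[OF S \<open>3 \<in> S\<close>]) simp
    have "n mod 3 = 0 \<or> n mod 3 = 1 \<or> n mod 3 = 2" by presburger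
    then show "n \<in> S \<longleftrightarrow> n \<in> semigroup_of_Apery3 a1 a2"
      by (elim disjE) (simp_all only: mem a0 a1[symmetric] a2[symmetric] semigroup_of_Apery3_def
          mem_Collect_eq, simp_all)
  qed
  have a1S: "a1 \<in> S" and a2S: "a2 \<in> S" and a1m: "a1 mod 3 = 1" and a2m: "a2 mod 3 = 2"
    unfolding a1 a2 using Apery_element_mem[OF S, of 3 1] Apery_element_mem[OF S, of 3 2] by simp_all
  then show "a1 mod 3 = 1" "a2 mod 3 = 2" by simp_all
  have "a1 \<noteq> 0" using a1m by auto
  then show "1 < a1" using ge3[OF a1S] by simp
  have "a1 + a1 \<in> S" "a2 + a2 \<in> S"
    using numerical_semigroupD(2)[OF S] a1S a2S by blast+
  moreover have "(a1 + a1) mod 3 = 2" "(a2 + a2) mod 3 = 1"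
    using a1m a2m by presburger+
  ultimately have "a2 \<le> a1 + a1" "a1 \<le> a2 + a2"
    unfolding a1 a2 by (blast intro: Least_le)+
  then show "a2 \<le> 2 * a1" "a1 \<le> 2 * a2" by simp_all
qed

lemma semigroup_of_Apery3_interval:
  assumes a1: "a1 mod 3 = 1" and a2: "a2 mod 3 = 2" and "\<bar>int a1 - int a2\<bar> \<le> 2"
  shows "semigroup_of_Apery3 a1 a2 = {n. n mod 3 = 0 \<or> min a1 a2 \<le> n}"
proof (rule Set.set_eqI)
  fix n :: nat
  have "(a2 + 1) mod 3 = 0" using a2 by presburger
  have mod3: "n mod 3 = 0 \<or> n mod 3 = 1 \<or> n mod 3 = 2" by presburger
  have "a2 = a1 + 1 \<or> a1 = a2 + 2" using assms by presburger
  then show "n \<in> semigroup_of_Apery3 a1 a2 \<longleftrightarrow> n \<in> {n. n mod 3 = 0 \<or> min a1 a2 \<le> n}"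
  proof (elim disjE)
    assume "a2 = a1 + 1"
    then show ?thesis unfolding semigroup_of_Apery3_def
      using a1 mod3 by (cases "n = a1") auto
  next
    assume "a1 = a2 + 2"
    then show ?thesis unfolding semigroup_of_Apery3_def
      using a2 \<open>(a2 + 1) mod 3 = 0\<close> mod3 by (cases "n = a2 \<or> n = a2 + 1") auto
  qed
qed

section \<open>Integrality of rationals\<close>

lemma rat_root_cubic_Ints:
  fixes x p r :: rat
  assumes "p \<in> \<int>" "r \<in> \<int>" "x ^ 3 + p * x + r = 0"
  shows "x \<in> \<int>"
proof -
  obtain a b where q: "quotient_of x = (a, b)" by (cases "quotient_of x") auto
  have "b > 0" "coprime a b" "x = of_int a / of_int b"
    using q quotient_of_denom_pos quotient_of_coprime quotient_of_div by blast+
  obtain p' r' where p': "p = of_int p'" and r': "r = of_int r'"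
    using assms(1,2) Ints_cases by metis
  have "of_int (a ^ 3 + p' * a * b ^ 2 + r' * b ^ 3) = of_int b ^ 3 * (x ^ 3 + p * x + r)"
    using \<open>b > 0\<close> unfolding \<open>x = _\<close> p' r' by (simp add: field_simps power3_eq_cube power2_eq_square)
  also have "\<dots> = 0" using assms(3) by simp
  finally have "a ^ 3 + p' * a * b ^ 2 + r' * b ^ 3 = 0" by (simp only: of_int_eq_0_iff)
  then have "a ^ 3 = b * (- p' * a * b - r' * b ^ 2)"
    by (simp add: algebra_simps power2_eq_square power3_eq_cube)
  then have "b dvd a ^ 3" by simp
  moreover have "coprime b (a ^ 3)" using \<open>coprime a b\<close> by (simp add: coprime_commute)
  ultimately have "is_unit b" using coprime_common_divisor dvd_refl by blast
  then show ?thesis using \<open>b > 0\<close> \<open>x = _\<close> by simp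
qed

lemma two_powi_Ints_iff: "(2 :: rat) powi z \<in> \<int> \<longleftrightarrow> 0 \<le> z"
proof
  assume "0 \<le> z"
  then show "(2 :: rat) powi z \<in> \<int>" by (simp add: power_int_def)
next
  assume "(2 :: rat) powi z \<in> \<int>"
  then obtain m where m: "(2 :: rat) powi z = of_int m" using Ints_cases by blast
  show "0 \<le> z"
  proof (rule ccontr)
    assume "\<not> 0 \<le> z"
    then have inv: "(2 :: rat) powi z = inverse (2 ^ nat (- z))"
      by (simp add: power_int_def power_one_over inverse_eq_divide)
    have "(1 :: rat) < 2 ^ nat (- z)" using \<open>\<not> 0 \<le> z\<close> by (intro one_less_power) auto
    then have "0 < (2 :: rat) powi z" "(2 :: rat) powi z < 1"
      unfolding inv using inverse_less_1_iff by auto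
    then show False unfolding m by simp
  qed
qed

section \<open>Rational matrices of size at most 2\<close>

lemma int_mat_square_iff:
  "B \<in> carrier_mat n n \<Longrightarrow> int_mat B \<longleftrightarrow> (\<forall>i<n. \<forall>j<n. B $$ (i, j) \<in> \<int>)"
  unfolding int_mat_def by auto

lemma S_of_dim_le_1:
  assumes A: "A \<in> carrier_mat d d" and "d \<le> 1" "3 \<in> S_of A"
  shows "n \<in> S_of A"
proof (cases "d = 0")
  case True
  then show ?thesis using A by (simp add: S_of_def int_mat_def)
next
  case False
  with \<open>d \<le> 1\<close> have "d = 1" by simp
  with A have A1: "A \<in> carrier_mat 1 1" by simp
  have pow: "(A ^\<^sub>m k) $$ (0, 0) = A $$ (0, 0) ^ k" for k
    by (induction k) (use A1 in \<open>auto simp: scalar_prod_def\<close>)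
  have int_mat_iff: "int_mat (A ^\<^sub>m k) \<longleftrightarrow> A $$ (0, 0) ^ k \<in> \<int>" for k
    unfolding int_mat_square_iff[OF pow_carrier_mat[OF A1]] pow[symmetric] by blast
  have "A $$ (0, 0) ^ 3 \<in> \<int>"
    using \<open>3 \<in> S_of A\<close> unfolding S_of_def mem_Collect_eq int_mat_iff .
  have "A $$ (0, 0) \<in> \<int>"
    by (rule rat_root_cubic_Ints[of 0 "- (A $$ (0, 0) ^ 3)"])
      (use \<open>A $$ (0, 0) ^ 3 \<in> \<int>\<close> in simp_all)
  then show ?thesis
    unfolding S_of_def mem_Collect_eq int_mat_iff by simp
qed

definition trace2 :: "'a :: comm_ring_1 mat \<Rightarrow> 'a" where
  "trace2 A = A $$ (0, 0) + A $$ (1, 1)"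

definition det2 :: "'a :: comm_ring_1 mat \<Rightarrow> 'a" where
  "det2 A = A $$ (0, 0) * A $$ (1, 1) - A $$ (0, 1) * A $$ (1, 0)"

lemma index_mult_mat2:
  assumes "A \<in> carrier_mat 2 2" "B \<in> carrier_mat 2 2" "i < 2" "j < 2"
  shows "(A * B) $$ (i, j) = A $$ (i, 0) * B $$ (0, j) + A $$ (i, 1) * B $$ (1, j)"
  using assms by (simp add: scalar_prod_def numeral_2_eq_2)

lemma mat2_Cayley_Hamilton:
  assumes "(A :: 'a :: comm_ring_1 mat) \<in> carrier_mat 2 2"
  shows "A * A = trace2 A \<cdot>\<^sub>m A - det2 A \<cdot>\<^sub>m 1\<^sub>m 2"
proof (rule eq_matI)
  fix i j assume "i < dim_row (trace2 A \<cdot>\<^sub>m A - det2 A \<cdot>\<^sub>m 1\<^sub>m 2)"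
    "j < dim_col (trace2 A \<cdot>\<^sub>m A - det2 A \<cdot>\<^sub>m 1\<^sub>m 2)"
  then have "i < 2" "j < 2" using assms by auto
  then show "(A * A) $$ (i, j) = (trace2 A \<cdot>\<^sub>m A - det2 A \<cdot>\<^sub>m 1\<^sub>m 2) $$ (i, j)"
    using assms
    by (auto simp: index_mult_mat2 trace2_def det2_def less_2_cases_iff algebra_simps
        simp del: index_mult_mat)
qed (use assms in auto)

lemma pow_mat_add_2_mat2:
  assumes A: "(A :: 'a :: comm_ring_1 mat) \<in> carrier_mat 2 2"
  shows "A ^\<^sub>m (k + 2) = trace2 A \<cdot>\<^sub>m A ^\<^sub>m (k + 1) - det2 A \<cdot>\<^sub>m A ^\<^sub>m k"
proof -
  have Ak: "A ^\<^sub>m k \<in> carrier_mat 2 2" using A by simp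
  have "A ^\<^sub>m (k + 2) = A ^\<^sub>m k * (A * A)"
    unfolding add_2_eq_Suc' using A by (simp add: assoc_mult_mat[OF Ak A A])
  also have "\<dots> = A ^\<^sub>m k * (trace2 A \<cdot>\<^sub>m A) - A ^\<^sub>m k * (det2 A \<cdot>\<^sub>m 1\<^sub>m 2)"
    unfolding mat2_Cayley_Hamilton[OF A] by (rule mult_minus_distrib_mat[OF Ak]) (use A in auto)
  also have "\<dots> = trace2 A \<cdot>\<^sub>m A ^\<^sub>m (k + 1) - det2 A \<cdot>\<^sub>m A ^\<^sub>m k"
    using mult_smult_distrib[OF Ak A] mult_smult_distrib[OF Ak one_carrier_mat] Ak
    by (simp add: right_mult_one_mat[OF Ak])
  finally show ?thesis .
qed

lemma det2_mult:
  assumes "A \<in> carrier_mat 2 2" "B \<in> carrier_mat 2 2"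
  shows "det2 (A * B) = det2 A * det2 (B :: 'a :: comm_ring_1 mat)"
  using assms by (simp add: det2_def index_mult_mat2 algebra_simps del: index_mult_mat)

lemma det2_pow:
  assumes "(A :: 'a :: comm_ring_1 mat) \<in> carrier_mat 2 2"
  shows "det2 (A ^\<^sub>m k) = det2 A ^ k"
proof (induction k)
  case (Suc k)
  then show ?case using det2_mult[OF pow_carrier_mat[OF assms] assms] by simp
qed (use assms in \<open>simp add: det2_def\<close>)

lemma trace2_pow_add_2:
  assumes A: "(A :: 'a :: comm_ring_1 mat) \<in> carrier_mat 2 2"
  shows "trace2 (A ^\<^sub>m (k + 2)) = trace2 A * trace2 (A ^\<^sub>m (k + 1)) - det2 A * trace2 (A ^\<^sub>m k)"
proof -
  have lin: "trace2 (a \<cdot>\<^sub>m X - b \<cdot>\<^sub>m Y) = a * trace2 X - b * trace2 Y"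
    if "X \<in> carrier_mat 2 2" "Y \<in> carrier_mat 2 2" for a b and X Y :: "'a mat"
    using that by (simp add: trace2_def algebra_simps)
  show ?thesis
    unfolding pow_mat_add_2_mat2[OF A] by (rule lin) (use A in auto)
qed

lemma mat2_trace_det_Ints:
  assumes A: "A \<in> carrier_mat 2 2" and "int_mat (A ^\<^sub>m 3)"
  shows "trace2 A \<in> \<int>" "det2 A \<in> \<int>"
proof -
  have "(A ^\<^sub>m 3) $$ (i, j) \<in> \<int>" if "i < 2" "j < 2" for i j
    using assms(2) that int_mat_square_iff[OF pow_carrier_mat[OF A]] by blast
  then have I: "trace2 (A ^\<^sub>m 3) \<in> \<int>" "det2 (A ^\<^sub>m 3) \<in> \<int>"
    unfolding trace2_def det2_def by auto
  have "det2 A ^ 3 + 0 * det2 A + - det2 (A ^\<^sub>m 3) = 0"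
    by (simp add: det2_pow[OF A])
  moreover have "0 \<in> \<int>" "- det2 (A ^\<^sub>m 3) \<in> \<int>"
    using I(2) by simp_all
  ultimately show d: "det2 A \<in> \<int>"
    using rat_root_cubic_Ints by blast
  have t1: "trace2 (A ^\<^sub>m 1) = trace2 A" and t0: "trace2 (A ^\<^sub>m 0) = 2"
    using A by (simp_all add: trace2_def)
  have t2: "trace2 (A ^\<^sub>m 2) = trace2 A * trace2 A - det2 A * 2"
    using trace2_pow_add_2[OF A, of 0] unfolding add_0 t0 t1 .
  have "(1 :: nat) + 2 = 3" by simp
  have t3: "trace2 (A ^\<^sub>m 3) = trace2 A * trace2 (A ^\<^sub>m 2) - det2 A * trace2 A"
    using trace2_pow_add_2[OF A, of 1] unfolding t1 one_add_one \<open>(1 :: nat) + 2 = 3\<close> .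
  have "trace2 A ^ 3 + (- 3 * det2 A) * trace2 A + - trace2 (A ^\<^sub>m 3) = 0"
    unfolding t3 t2 by (simp add: power3_eq_cube algebra_simps)
  moreover have "- 3 * det2 A \<in> \<int>" "- trace2 (A ^\<^sub>m 3) \<in> \<int>"
    using d I(1) by simp_all
  ultimately show "trace2 A \<in> \<int>"
    using rat_root_cubic_Ints by blast
qed

lemma int_mat_pow_add_2_mat2:
  assumes A: "A \<in> carrier_mat 2 2" and "trace2 A \<in> \<int>" "det2 A \<in> \<int>"
    and "int_mat (A ^\<^sub>m k)" "int_mat (A ^\<^sub>m (k + 1))"
  shows "int_mat (A ^\<^sub>m (k + 2))"
  using assms unfolding pow_mat_add_2_mat2[OF A] int_mat_square_iff[OF pow_carrier_mat[OF A]]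
    int_mat_square_iff[OF minus_carrier_mat[OF smult_carrier_mat[OF pow_carrier_mat[OF A]]]]
  by simp

lemma S_of_mat2_add:
  assumes A: "A \<in> carrier_mat 2 2" and "3 \<in> S_of A" "k \<in> S_of A" "k + 1 \<in> S_of A"
  shows "k + l \<in> S_of A"
proof -
  have "trace2 A \<in> \<int>" "det2 A \<in> \<int>"
    using mat2_trace_det_Ints[OF A] assms(2) by (simp_all add: S_of_def)
  have "k + l \<in> S_of A \<and> k + l + 1 \<in> S_of A"
  proof (induction l)
    case (Suc l)
    then have "int_mat (A ^\<^sub>m (k + l + 2))"
      using int_mat_pow_add_2_mat2[OF A \<open>trace2 A \<in> \<int>\<close> \<open>det2 A \<in> \<int>\<close>] by (simp add: S_of_def)
    then show ?case using Suc by (simp add: S_of_def)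
  qed (use assms in simp)
  then show ?thesis ..
qed

lemma S_of_mat2_semigroup_of_Apery3:
  assumes A: "A \<in> carrier_mat 2 2" and S: "S_of A = semigroup_of_Apery3 a1 a2"
    and a1: "a1 mod 3 = 1" and a2: "a2 mod 3 = 2"
  shows "\<bar>int a1 - int a2\<bar> \<le> 2"
proof -
  have "3 \<in> S_of A" unfolding S by (simp add: semigroup_of_Apery3_def)
  have "(a1 - 1) mod 3 = 0" "a1 - 1 + 1 = a1" using a1 by presburger+
  then have "a1 - 1 \<in> S_of A" "a1 - 1 + 1 \<in> S_of A"
    unfolding S semigroup_of_Apery3_def using a1 by simp_all
  then have "a1 - 1 + 2 \<in> S_of A" by (rule S_of_mat2_add[OF A \<open>3 \<in> S_of A\<close>])
  moreover have "a1 - 1 + 2 = a1 + 1" "(a1 + 1) mod 3 = 2" using a1 by presburger+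
  ultimately have "a2 \<le> a1 + 1" unfolding S semigroup_of_Apery3_def by simp
  have "(a2 + 1) mod 3 = 0" using a2 by presburger
  then have "a2 \<in> S_of A" "a2 + 1 \<in> S_of A"
    unfolding S semigroup_of_Apery3_def using a2 by simp_all
  then have "a2 + 2 \<in> S_of A" by (rule S_of_mat2_add[OF A \<open>3 \<in> S_of A\<close>])
  moreover have "(a2 + 2) mod 3 = 1" using a2 by presburger
  ultimately have "a1 \<le> a2 + 2" unfolding S semigroup_of_Apery3_def by simp
  with \<open>a2 \<le> a1 + 1\<close> show ?thesis by linarith
qed

section \<open>Realising the semigroups\<close>

(* weighted_mat k C = D (2 C) D^-1 for D = diag (2^(k i)). *)
definition weighted_mat :: "(nat \<Rightarrow> int) \<Rightarrow> rat mat \<Rightarrow> rat mat" where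
  "weighted_mat k C = mat (dim_row C) (dim_col C) (\<lambda>(i, j). 2 powi (1 + k i - k j) * C $$ (i, j))"

lemma weighted_mat_carrier: "C \<in> carrier_mat n n \<Longrightarrow> weighted_mat k C \<in> carrier_mat n n"
  unfolding weighted_mat_def by auto

lemma index_weighted_mat_pow:
  assumes C: "C \<in> carrier_mat n n" and "i < n" "j < n"
  shows "(weighted_mat k C ^\<^sub>m m) $$ (i, j) = 2 powi (int m + k i - k j) * (C ^\<^sub>m m) $$ (i, j)"
  using assms(3)
proof (induction m arbitrary: j)
  case 0
  then show ?case using C \<open>i < n\<close> by (simp add: weighted_mat_def)
next
  case (Suc m)
  let ?W = "weighted_mat k C"
  have W: "?W \<in> carrier_mat n n" using C by (rule weighted_mat_carrier)
  have "(?W ^\<^sub>m Suc m) $$ (i, j) = (\<Sum>l<n. (?W ^\<^sub>m m) $$ (i, l) * ?W $$ (l, j))"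
    using W \<open>i < n\<close> Suc.prems
    by (simp add: scalar_prod_def lessThan_atLeast0)
  also have "\<dots> = (\<Sum>l<n. 2 powi (int (Suc m) + k i - k j) * ((C ^\<^sub>m m) $$ (i, l) * C $$ (l, j)))"
  proof (rule sum.cong[OF refl])
    fix l assume "l \<in> {..<n}"
    then have "(?W ^\<^sub>m m) $$ (i, l) * ?W $$ (l, j)
        = (2 powi (int m + k i - k l) * 2 powi (1 + k l - k j)) * ((C ^\<^sub>m m) $$ (i, l) * C $$ (l, j))"
      using Suc.IH[of l] Suc.prems C by (simp add: weighted_mat_def ac_simps)
    also have "(2 :: rat) powi (int m + k i - k l) * 2 powi (1 + k l - k j)
        = 2 powi (int (Suc m) + k i - k j)"
      by (subst power_int_add[symmetric]) (simp_all add: algebra_simps)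
    finally show "(?W ^\<^sub>m m) $$ (i, l) * ?W $$ (l, j)
        = 2 powi (int (Suc m) + k i - k j) * ((C ^\<^sub>m m) $$ (i, l) * C $$ (l, j))" .
  qed
  also have "\<dots> = 2 powi (int (Suc m) + k i - k j) * (C ^\<^sub>m Suc m) $$ (i, j)"
    using C \<open>i < n\<close> Suc.prems by (simp add: sum_distrib_left scalar_prod_def lessThan_atLeast0)
  finally show ?case .
qed

lemma int_mat_weighted_mat_pow_iff:
  assumes C: "C \<in> carrier_mat n n" and signs: "\<forall>i<n. \<forall>j<n. (C ^\<^sub>m m) $$ (i, j) \<in> {-1, 0, 1}"
  shows "int_mat (weighted_mat k C ^\<^sub>m m) \<longleftrightarrow>
    (\<forall>i<n. \<forall>j<n. (C ^\<^sub>m m) $$ (i, j) \<noteq> 0 \<longrightarrow> 0 \<le> int m + k i - k j)"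
proof -
  have sign: "2 powi z * c \<in> \<int> \<longleftrightarrow> c \<noteq> 0 \<longrightarrow> 0 \<le> z" if "c \<in> {-1, 0, 1 :: rat}" for z c
    using that two_powi_Ints_iff[of z] by (auto simp: minus_in_Ints_iff)
  show ?thesis
    unfolding int_mat_square_iff[OF pow_carrier_mat[OF weighted_mat_carrier[OF C]]]
    using index_weighted_mat_pow[OF C] signs sign by simp
qed

lemma mem_S_of_weighted_mat_iff:
  assumes C: "C \<in> carrier_mat d d" and pow: "C ^\<^sub>m n = B"
    and signs: "\<forall>i<d. \<forall>j<d. B $$ (i, j) \<in> {-1, 0, 1}"
  shows "n \<in> S_of (weighted_mat k C) \<longleftrightarrow> (\<forall>i<d. \<forall>j<d. B $$ (i, j) \<noteq> 0 \<longrightarrow> 0 \<le> int n + k i - k j)"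
  using int_mat_weighted_mat_pow_iff[OF C, of n k] signs unfolding pow S_of_def by simp

lemma less_3_cases_iff: "(i :: nat) < 3 \<longleftrightarrow> i = 0 \<or> i = 1 \<or> i = 2"
  by auto

lemma index_mult_mat3:
  assumes "A \<in> carrier_mat 3 3" "B \<in> carrier_mat 3 3" "i < 3" "j < 3"
  shows "(A * B) $$ (i, j) = A $$ (i, 0) * B $$ (0, j) + A $$ (i, 1) * B $$ (1, j)
    + A $$ (i, 2) * B $$ (2, j)"
  using assms by (simp add: scalar_prod_def numeral_3_eq_3 numeral_2_eq_2)

lemma pow_mat_order_3:
  assumes A: "A \<in> carrier_mat n n" and A3: "A * A * A = 1\<^sub>m n"
  shows "A ^\<^sub>m k = (if k mod 3 = 0 then 1\<^sub>m n else if k mod 3 = 1 then A else A * A)"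
proof (induction k)
  case 0
  show ?case using A by simp
next
  case (Suc k)
  have "k mod 3 = 0 \<or> k mod 3 = 1 \<or> k mod 3 = 2" by presburger
  then show ?case
  proof (elim disjE)
    assume "k mod 3 = 0"
    moreover have "Suc k mod 3 = 1" using \<open>k mod 3 = 0\<close> by presburger
    ultimately show ?case using Suc.IH A by simp
  next
    assume "k mod 3 = 1"
    moreover have "Suc k mod 3 = 2" using \<open>k mod 3 = 1\<close> by presburger
    ultimately show ?case using Suc.IH by simp
  next
    assume "k mod 3 = 2"
    moreover have "Suc k mod 3 = 0" using \<open>k mod 3 = 2\<close> by presburger
    ultimately show ?case using Suc.IH A3 by simp
  qed
qed

(* Multiplication by a primitive cube root of unity w on Z[w], in the basis 1, w. *)
definition omega_mat :: "rat mat" where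
  "omega_mat = mat_of_rows_list 2 [[0, -1], [1, -1]]"

definition perm3_mat :: "rat mat" where
  "perm3_mat = mat_of_rows_list 3 [[0, 0, 1], [1, 0, 0], [0, 1, 0]]"

lemma omega_mat_carrier: "omega_mat \<in> carrier_mat 2 2"
  unfolding omega_mat_def mat_of_rows_list_def by (rule carrier_matI) simp_all

lemma perm3_mat_carrier: "perm3_mat \<in> carrier_mat 3 3"
  unfolding perm3_mat_def mat_of_rows_list_def by (rule carrier_matI) simp_all

lemma omega_mat_sq: "omega_mat * omega_mat = mat_of_rows_list 2 [[-1, 1], [-1, 0]]"
proof (rule eq_matI)
  fix i j assume "i < dim_row (mat_of_rows_list 2 [[-1, 1], [-1, 0 :: rat]])"
    "j < dim_col (mat_of_rows_list 2 [[-1, 1], [-1, 0 :: rat]])"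
  then have "i < 2" "j < 2" by (simp_all add: mat_of_rows_list_def)
  then show "(omega_mat * omega_mat) $$ (i, j) = mat_of_rows_list 2 [[-1, 1], [-1, 0]] $$ (i, j)"
    unfolding index_mult_mat2[OF omega_mat_carrier omega_mat_carrier \<open>i < 2\<close> \<open>j < 2\<close>]
    by (auto simp: less_2_cases_iff omega_mat_def mat_of_rows_list_def)
qed (use omega_mat_carrier in \<open>simp_all add: mat_of_rows_list_def\<close>)

lemma omega_mat_cube: "omega_mat * omega_mat * omega_mat = 1\<^sub>m 2"
proof (rule eq_matI)
  have sq: "mat_of_rows_list 2 [[-1, 1], [-1, 0]] \<in> carrier_mat 2 2"
    unfolding mat_of_rows_list_def by (rule carrier_matI) simp_all
  fix i j assume "i < dim_row (1\<^sub>m 2 :: rat mat)" "j < dim_col (1\<^sub>m 2 :: rat mat)"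
  then have "i < 2" "j < 2" by simp_all
  then show "(omega_mat * omega_mat * omega_mat) $$ (i, j) = 1\<^sub>m 2 $$ (i, j)"
    unfolding omega_mat_sq index_mult_mat2[OF sq omega_mat_carrier \<open>i < 2\<close> \<open>j < 2\<close>]
    by (auto simp: less_2_cases_iff omega_mat_def mat_of_rows_list_def)
qed (use omega_mat_carrier in simp_all)

lemma perm3_mat_sq: "perm3_mat * perm3_mat = mat_of_rows_list 3 [[0, 1, 0], [0, 0, 1], [1, 0, 0]]"
proof (rule eq_matI)
  fix i j assume "i < dim_row (mat_of_rows_list 3 [[0, 1, 0], [0, 0, 1], [1, 0, 0 :: rat]])"
    "j < dim_col (mat_of_rows_list 3 [[0, 1, 0], [0, 0, 1], [1, 0, 0 :: rat]])"
  then have "i < 3" "j < 3" by (simp_all add: mat_of_rows_list_def)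
  then show "(perm3_mat * perm3_mat) $$ (i, j)
      = mat_of_rows_list 3 [[0, 1, 0], [0, 0, 1], [1, 0, 0]] $$ (i, j)"
    unfolding index_mult_mat3[OF perm3_mat_carrier perm3_mat_carrier \<open>i < 3\<close> \<open>j < 3\<close>]
    by (auto simp: less_3_cases_iff perm3_mat_def mat_of_rows_list_def)
qed (use perm3_mat_carrier in \<open>simp_all add: mat_of_rows_list_def\<close>)

lemma perm3_mat_cube: "perm3_mat * perm3_mat * perm3_mat = 1\<^sub>m 3"
proof (rule eq_matI)
  have sq: "mat_of_rows_list 3 [[0, 1, 0], [0, 0, 1], [1, 0, 0]] \<in> carrier_mat 3 3"
    unfolding mat_of_rows_list_def by (rule carrier_matI) simp_all
  fix i j assume "i < dim_row (1\<^sub>m 3 :: rat mat)" "j < dim_col (1\<^sub>m 3 :: rat mat)"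
  then have "i < 3" "j < 3" by simp_all
  then show "(perm3_mat * perm3_mat * perm3_mat) $$ (i, j) = 1\<^sub>m 3 $$ (i, j)"
    unfolding perm3_mat_sq index_mult_mat3[OF sq perm3_mat_carrier \<open>i < 3\<close> \<open>j < 3\<close>]
    by (auto simp: less_3_cases_iff perm3_mat_def mat_of_rows_list_def)
qed (use perm3_mat_carrier in simp_all)

lemma S_of_weighted_omega_mat:
  "S_of (weighted_mat (\<lambda>i. int (i * e)) omega_mat) = {n. n mod 3 = 0 \<or> e \<le> n}"
proof (rule Set.set_eqI)
  fix n :: nat
  note pow = pow_mat_order_3[OF omega_mat_carrier omega_mat_cube, of n]
  note iff = mem_S_of_weighted_mat_iff[OF omega_mat_carrier, of n _ "\<lambda>i. int (i * e)"]
  have "n mod 3 = 0 \<or> n mod 3 = 1 \<or> n mod 3 = 2" by presburger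
  then show "n \<in> S_of (weighted_mat (\<lambda>i. int (i * e)) omega_mat) \<longleftrightarrow> n \<in> {n. n mod 3 = 0 \<or> e \<le> n}"
  proof (elim disjE)
    assume "n mod 3 = 0"
    then show ?thesis using iff[of "1\<^sub>m 2"] pow by (simp add: less_2_cases_iff)
  next
    assume "n mod 3 = 1"
    then show ?thesis using iff[of omega_mat] pow
      by (auto simp: less_2_cases_iff omega_mat_def mat_of_rows_list_def)
  next
    assume "n mod 3 = 2"
    then show ?thesis using iff[of "mat_of_rows_list 2 [[-1, 1], [-1, 0]]"] pow omega_mat_sq
      by (auto simp: less_2_cases_iff mat_of_rows_list_def)
  qed
qed

(* On the support of perm3_mat^n the exponents n + k i - k j are n - a1, n + a2, n + a1 - a2
   if n mod 3 = 1, and n - a2, n + a2 - a1, n + a1 if n mod 3 = 2. *)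
lemma S_of_weighted_perm3_mat:
  assumes "a2 \<le> 2 * a1" "a1 \<le> 2 * a2"
  shows "S_of (weighted_mat (\<lambda>i. int ([0, a2, a1] ! i)) perm3_mat) = semigroup_of_Apery3 a1 a2"
proof (rule Set.set_eqI)
  fix n :: nat
  note pow = pow_mat_order_3[OF perm3_mat_carrier perm3_mat_cube, of n]
  note iff = mem_S_of_weighted_mat_iff[OF perm3_mat_carrier, of n _ "\<lambda>i. int ([0, a2, a1] ! i)"]
  have "n mod 3 = 0 \<or> n mod 3 = 1 \<or> n mod 3 = 2" by presburger
  then show "n \<in> S_of (weighted_mat (\<lambda>i. int ([0, a2, a1] ! i)) perm3_mat) \<longleftrightarrow>
      n \<in> semigroup_of_Apery3 a1 a2"
  proof (elim disjE)
    assume "n mod 3 = 0"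
    then show ?thesis using iff[of "1\<^sub>m 3"] pow
      by (simp add: less_3_cases_iff semigroup_of_Apery3_def)
  next
    assume "n mod 3 = 1"
    then show ?thesis using iff[of perm3_mat] pow assms
      by (auto simp: less_3_cases_iff perm3_mat_def mat_of_rows_list_def semigroup_of_Apery3_def)
  next
    assume "n mod 3 = 2"
    then show ?thesis using iff[of "mat_of_rows_list 3 [[0, 1, 0], [0, 0, 1], [1, 0, 0]]"] pow
        perm3_mat_sq assms
      by (auto simp: less_3_cases_iff mat_of_rows_list_def semigroup_of_Apery3_def)
  qed
qed

section \<open>Matricial dimension\<close>

lemma dim_mat_eqI:
  assumes "A \<in> carrier_mat d d" "S = S_of A"
    and "\<And>d' B. B \<in> carrier_mat d' d' \<Longrightarrow> d' < d \<Longrightarrow> S \<noteq> S_of B"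
  shows "dim_mat S = d"
  unfolding dim_mat_def
proof (rule Least_equality)
  show "\<exists>A \<in> carrier_mat d d. S = S_of A" using assms(1,2) by blast
  fix d' assume "\<exists>B \<in> carrier_mat d' d'. S = S_of B"
  then obtain B where B: "B \<in> carrier_mat d' d'" "S = S_of B" by blast
  show "d \<le> d'"
  proof (rule ccontr)
    assume "\<not> d \<le> d'"
    then have "d' < d" by simp
    from assms(3)[OF B(1) this] B(2) show False by simp
  qed
qed

lemma semigroup_of_Apery3_ne_S_of_dim_le_1:
  assumes "1 < a1" "B \<in> carrier_mat d d" "d \<le> 1"
  shows "semigroup_of_Apery3 a1 a2 \<noteq> S_of B"
proof
  assume S: "semigroup_of_Apery3 a1 a2 = S_of B"
  have "3 \<in> S_of B" "1 \<notin> S_of B"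
    unfolding S[symmetric] semigroup_of_Apery3_def using assms(1) by simp_all
  then show False using S_of_dim_le_1[OF assms(2,3)] by blast
qed

lemma dim_mat_semigroup_of_Apery3_close:
  assumes "a1 mod 3 = 1" "a2 mod 3 = 2" "1 < a1" "\<bar>int a1 - int a2\<bar> \<le> 2"
  shows "dim_mat (semigroup_of_Apery3 a1 a2) = 2"
proof (rule dim_mat_eqI[OF weighted_mat_carrier[OF omega_mat_carrier]])
  show "semigroup_of_Apery3 a1 a2 = S_of (weighted_mat (\<lambda>i. int (i * min a1 a2)) omega_mat)"
    unfolding S_of_weighted_omega_mat using semigroup_of_Apery3_interval assms(1,2,4) .
  show "semigroup_of_Apery3 a1 a2 \<noteq> S_of B" if "B \<in> carrier_mat d d" "d < 2" for d B
    using semigroup_of_Apery3_ne_S_of_dim_le_1[OF assms(3) that(1)] that(2) by simp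
qed

lemma dim_mat_semigroup_of_Apery3_far:
  assumes "a1 mod 3 = 1" "a2 mod 3 = 2" "1 < a1" "a2 \<le> 2 * a1" "a1 \<le> 2 * a2"
    and "\<bar>int a1 - int a2\<bar> > 2"
  shows "dim_mat (semigroup_of_Apery3 a1 a2) = 3"
proof (rule dim_mat_eqI[OF weighted_mat_carrier[OF perm3_mat_carrier]])
  show "semigroup_of_Apery3 a1 a2 = S_of (weighted_mat (\<lambda>i. int ([0, a2, a1] ! i)) perm3_mat)"
    using S_of_weighted_perm3_mat[OF assms(4,5)] by simp
  show "semigroup_of_Apery3 a1 a2 \<noteq> S_of B" if "B \<in> carrier_mat d d" "d < 3" for d B
  proof (cases "d = 2")
    case True
    then show ?thesis
      using S_of_mat2_semigroup_of_Apery3[of B a1 a2] that(1) assms(1,2,6) by auto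
  next
    case False
    then show ?thesis
      using semigroup_of_Apery3_ne_S_of_dim_le_1[OF assms(3) that(1)] that(2) by simp
  qed
qed

theorem theorem3p4:
  fixes S :: "nat set" and a1 a2 :: nat
  assumes "numerical_semigroup S"
    and "multiplicity_ns S = 3"
    and "a1 = (LEAST x. x \<in> S \<and> x mod 3 = 1)"
    and "a2 = (LEAST x. x \<in> S \<and> x mod 3 = 2)"
  shows "(\<bar>int a1 - int a2\<bar> \<le> 2 \<longrightarrow> dim_mat S = 2)
       \<and> (\<bar>int a1 - int a2\<bar> > 2 \<longrightarrow> dim_mat S = 3)"
  using multiplicity_3_semigroup[OF assms] dim_mat_semigroup_of_Apery3_close[of a1 a2]
    dim_mat_semigroup_of_Apery3_far[of a1 a2]
  by simp

end
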